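(* Let $R$ be a Noetherian ring and $I$ an ideal of $R$. Consider the functor $\Gamma_I$ on finitely generated $R$-modules, $\Gamma_I(M)=\{m\in M: I^km=0\text{ for some }k\ge0\}$. The following are equivalent: (a) $\Gamma_I$ is representable; (b) $\Gamma_I$ is finitely generated; (c) $I^n=I^{n+1}$ for some $n\ge0$.
   Context: For an $R$-module $X$, $h_X=\operatorname{Hom}_R(X,-)$. An $R$-linear functor $F$ from finitely generated $R$-modules to themselves is representable if $F\cong h_M$ for some finitely generated $M$, and finitely generated if there is a finitely generated $M$ and a surjective natural transformation $h_M\to F$. *)

theory Defs
  imports "HOL-Algebra.Algebra"
begin

text \<open>Fixed carrier type for objects of the category of finitely generated R-modules.
  Every finitely generated module over a ring with carrier in 'a is isomorphic to a quotient
  of a finite free module R^n, whose elements are cosets, i.e. elements of (nat => 'a) set.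
  Hence the full subcategory of modules with carrier of this type is equivalent to the
  category of all finitely generated R-modules.\<close>

type_synonym 'a obj = "('a, (nat \<Rightarrow> 'a) set) module"

definition fg_module :: "('a, 'c) ring_scheme \<Rightarrow> ('a, 'b) module \<Rightarrow> bool" where
  "fg_module R M \<longleftrightarrow> module R M \<and>
     (\<exists>A. finite A \<and> A \<subseteq> carrier M \<and>
        (\<forall>x \<in> carrier M. \<exists>c. c \<in> A \<rightarrow> carrier R \<and>
            x = finsum M (\<lambda>a. c a \<odot>\<^bsub>M\<^esub> a) A))"

text \<open>R-linear maps M -> N (extensional, so that a map is determined by its values on carrier M).\<close>
definition mod_hom :: "('a, 'c) ring_scheme \<Rightarrow> ('a, 'b) module \<Rightarrow> ('a, 'd) module \<Rightarrow> ('b \<Rightarrow> 'd) set" where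
  "mod_hom R M N = {f. f \<in> carrier M \<rightarrow>\<^sub>E carrier N \<and>
     (\<forall>x \<in> carrier M. \<forall>y \<in> carrier M. f (x \<oplus>\<^bsub>M\<^esub> y) = f x \<oplus>\<^bsub>N\<^esub> f y) \<and>
     (\<forall>r \<in> carrier R. \<forall>x \<in> carrier M. f (r \<odot>\<^bsub>M\<^esub> x) = r \<odot>\<^bsub>N\<^esub> f x)}"

definition hom_add :: "('a, 'b) module \<Rightarrow> ('a, 'd) module \<Rightarrow> ('b \<Rightarrow> 'd) \<Rightarrow> ('b \<Rightarrow> 'd) \<Rightarrow> ('b \<Rightarrow> 'd)" where
  "hom_add M N f g = (\<lambda>x \<in> carrier M. f x \<oplus>\<^bsub>N\<^esub> g x)"

definition hom_smult :: "('a, 'b) module \<Rightarrow> ('a, 'd) module \<Rightarrow> 'a \<Rightarrow> ('b \<Rightarrow> 'd) \<Rightarrow> ('b \<Rightarrow> 'd)" where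
  "hom_smult M N r f = (\<lambda>x \<in> carrier M. r \<odot>\<^bsub>N\<^esub> f x)"

definition ideal_pow :: "('a, 'c) ring_scheme \<Rightarrow> 'a set \<Rightarrow> nat \<Rightarrow> 'a set" where
  "ideal_pow R I k = I [^]\<^bsub>ideals_set R\<^esub> k"

definition Gamma :: "('a, 'c) ring_scheme \<Rightarrow> 'a set \<Rightarrow> ('a, 'b) module \<Rightarrow> 'b set" where
  "Gamma R I M = {m \<in> carrier M. \<exists>k. \<forall>a \<in> ideal_pow R I k. a \<odot>\<^bsub>M\<^esub> m = \<zero>\<^bsub>M\<^esub>}"

definition nat_trans_hom_Gamma ::
  "('a, 'c) ring_scheme \<Rightarrow> 'a set \<Rightarrow> 'a obj \<Rightarrow> ('a obj \<Rightarrow> ((nat \<Rightarrow> 'a) set \<Rightarrow> (nat \<Rightarrow> 'a) set) \<Rightarrow> (nat \<Rightarrow> 'a) set) \<Rightarrow> bool" where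
  "nat_trans_hom_Gamma R I M \<eta> \<longleftrightarrow>
     (\<forall>N. fg_module R N \<longrightarrow>
        (\<forall>f \<in> mod_hom R M N. \<eta> N f \<in> Gamma R I N) \<and>
        (\<forall>f \<in> mod_hom R M N. \<forall>g \<in> mod_hom R M N.
            \<eta> N (hom_add M N f g) = \<eta> N f \<oplus>\<^bsub>N\<^esub> \<eta> N g) \<and>
        (\<forall>r \<in> carrier R. \<forall>f \<in> mod_hom R M N.
            \<eta> N (hom_smult M N r f) = r \<odot>\<^bsub>N\<^esub> \<eta> N f)) \<and>
     (\<forall>N N'. fg_module R N \<longrightarrow> fg_module R N' \<longrightarrow>
        (\<forall>g \<in> mod_hom R N N'. \<forall>f \<in> mod_hom R M N.
            \<eta> N' (compose (carrier M) g f) = g (\<eta> N f)))"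

text \<open>Gamma_I is representable: naturally isomorphic to h_M for a finitely generated M.
  (A natural transformation with bijective components is a natural isomorphism.)\<close>
definition Gamma_representable :: "('a, 'c) ring_scheme \<Rightarrow> 'a set \<Rightarrow> bool" where
  "Gamma_representable R I \<longleftrightarrow>
     (\<exists>(M :: 'a obj) \<eta>. fg_module R M \<and> nat_trans_hom_Gamma R I M \<eta> \<and>
        (\<forall>N. fg_module R N \<longrightarrow> bij_betw (\<eta> N) (mod_hom R M N) (Gamma R I N)))"

definition Gamma_fin_gen :: "('a, 'c) ring_scheme \<Rightarrow> 'a set \<Rightarrow> bool" where
  "Gamma_fin_gen R I \<longleftrightarrow>
     (\<exists>(M :: 'a obj) \<eta>. fg_module R M \<and> nat_trans_hom_Gamma R I M \<eta> \<and>
        (\<forall>N. fg_module R N \<longrightarrow> \<eta> N ` mod_hom R M N = Gamma R I N))"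

end

theory Submission
  imports Defs
begin

text \<open>If \<open>I^n = I^(n+1)\<close>, every \<open>I\<close>-torsion element is killed by \<open>I^n\<close>, so \<open>\<Gamma>\<^sub>I(N)\<close> is
  the set of elements of \<open>N\<close> annihilated by \<open>I^n\<close>, which \<open>f \<mapsto> f(1)\<close> identifies with
  \<open>Hom(R/I^n, N)\<close>: \<open>\<Gamma>\<^sub>I\<close> is represented by \<open>R/I^n\<close>. Conversely, by Yoneda a surjection
  \<open>h\<^sub>M \<rightarrow> \<Gamma>\<^sub>I\<close> is \<open>f \<mapsto> f(x)\<close> for some \<open>x \<in> \<Gamma>\<^sub>I(M)\<close>, which is killed by some \<open>I^k\<close>;
  hence so is every torsion element of every finitely generated module. For the class of \<open>1\<close>
  in \<open>R/I^(k+1)\<close> this says \<open>I^k \<subseteq> I^(k+1)\<close>.\<close>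

text \<open>Carriers of objects have type \<open>(nat \<Rightarrow> 'a) set\<close>, so a module whose elements are sets
  \<open>C\<close> of ring elements (such as \<open>R/J\<close>, whose elements are cosets) is realised by
  replacing each \<open>C\<close> with \<open>seq_lift C\<close>.\<close>

definition seq_lift :: "'a set \<Rightarrow> (nat \<Rightarrow> 'a) set" where
  "seq_lift C = {g. g 0 \<in> C}"

lemma seq_lift_inverse [simp]: "(\<lambda>g. g 0) ` seq_lift C = C"
proof
  show "C \<subseteq> (\<lambda>g. g 0) ` seq_lift C"
    by (auto simp: seq_lift_def intro!: image_eqI[where x = "\<lambda>_. c" for c])
qed (auto simp: seq_lift_def)

lemma inj_seq_lift: "inj seq_lift"
  by (metis injI seq_lift_inverse)

definition ring_hom_module ::
    "('a set, 'd) ring_scheme \<Rightarrow> ('r \<Rightarrow> 'a set) \<Rightarrow> ('r, (nat \<Rightarrow> 'a) set) module" where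
  "ring_hom_module Q h =
     \<lparr>carrier = seq_lift ` carrier Q, monoid.mult = undefined, one = undefined,
      ring.zero = seq_lift \<zero>\<^bsub>Q\<^esub>,
      ring.add = (\<lambda>A B. seq_lift ((\<lambda>g. g 0) ` A \<oplus>\<^bsub>Q\<^esub> (\<lambda>g. g 0) ` B)),
      module.smult = (\<lambda>r A. seq_lift (h r \<otimes>\<^bsub>Q\<^esub> (\<lambda>g. g 0) ` A))\<rparr>"

lemma ring_hom_module_carrier: "carrier (ring_hom_module Q h) = seq_lift ` carrier Q"
  and ring_hom_module_zero: "\<zero>\<^bsub>ring_hom_module Q h\<^esub> = seq_lift \<zero>\<^bsub>Q\<^esub>"
  and ring_hom_module_add: "seq_lift C \<oplus>\<^bsub>ring_hom_module Q h\<^esub> seq_lift D = seq_lift (C \<oplus>\<^bsub>Q\<^esub> D)"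
  and ring_hom_module_smult: "r \<odot>\<^bsub>ring_hom_module Q h\<^esub> seq_lift C = seq_lift (h r \<otimes>\<^bsub>Q\<^esub> C)"
  by (simp_all add: ring_hom_module_def)

lemma module_ring_hom_module:
  assumes "cring R" and "ring Q" and h: "h \<in> ring_hom R Q"
  shows "module R (ring_hom_module Q h)"
proof -
  interpret Q: ring Q by fact
  have hc: "h r \<in> carrier Q" if "r \<in> carrier R" for r
    using h that by (rule ring_hom_closed)
  note simps =
    ring_hom_module_carrier ring_hom_module_zero ring_hom_module_add ring_hom_module_smult
  show ?thesis
  proof (rule moduleI)
    show "cring R" by fact
    show "abelian_group (ring_hom_module Q h)"
    proof (rule abelian_groupI)
      fix x assume "x \<in> carrier (ring_hom_module Q h)"
      then obtain C where C: "C \<in> carrier Q" "x = seq_lift C" by (auto simp: simps)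
      then show "\<exists>y \<in> carrier (ring_hom_module Q h).
          y \<oplus>\<^bsub>ring_hom_module Q h\<^esub> x = \<zero>\<^bsub>ring_hom_module Q h\<^esub>"
        by (intro bexI[of _ "seq_lift (\<ominus>\<^bsub>Q\<^esub> C)"]) (auto simp: simps Q.l_neg)
    qed (auto simp: simps Q.a_ac)
  qed (use hc in \<open>auto simp: simps ring_hom_add[OF h] ring_hom_mult[OF h] ring_hom_one[OF h]
                   Q.l_distr Q.r_distr Q.m_assoc\<close>)
qed

definition quotient_module :: "('a, 'c) ring_scheme \<Rightarrow> 'a set \<Rightarrow> 'a obj" where
  "quotient_module R J = ring_hom_module (R Quot J) (a_r_coset R J)"

definition annihilated_by :: "('a, 'b) module \<Rightarrow> 'a set \<Rightarrow> 'b set" where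
  "annihilated_by M J = {m \<in> carrier M. \<forall>a \<in> J. a \<odot>\<^bsub>M\<^esub> m = \<zero>\<^bsub>M\<^esub>}"

lemma mod_hom_closed: "f \<in> mod_hom R M N \<Longrightarrow> x \<in> carrier M \<Longrightarrow> f x \<in> carrier N"
  and mod_hom_add: "f \<in> mod_hom R M N \<Longrightarrow> x \<in> carrier M \<Longrightarrow> y \<in> carrier M \<Longrightarrow>
    f (x \<oplus>\<^bsub>M\<^esub> y) = f x \<oplus>\<^bsub>N\<^esub> f y"
  and mod_hom_smult: "f \<in> mod_hom R M N \<Longrightarrow> r \<in> carrier R \<Longrightarrow> x \<in> carrier M \<Longrightarrow>
    f (r \<odot>\<^bsub>M\<^esub> x) = r \<odot>\<^bsub>N\<^esub> f x"
  by (auto simp: mod_hom_def)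

lemma mod_hom_undefined: "f \<in> mod_hom R M N \<Longrightarrow> x \<notin> carrier M \<Longrightarrow> f x = undefined"
  unfolding mod_hom_def by (blast intro: PiE_arb)

lemma mod_hom_id:
  assumes "module R M"
  shows "(\<lambda>x \<in> carrier M. x) \<in> mod_hom R M M"
proof -
  interpret module R M by fact
  show ?thesis by (auto simp: mod_hom_def)
qed

lemma mod_hom_zero:
  assumes "module R M" and "module R N" and f: "f \<in> mod_hom R M N"
  shows "f \<zero>\<^bsub>M\<^esub> = \<zero>\<^bsub>N\<^esub>"
proof -
  interpret M: module R M by fact
  interpret N: module R N by fact
  have f0: "f \<zero>\<^bsub>M\<^esub> \<in> carrier N" using f by (simp add: mod_hom_closed)
  have "f \<zero>\<^bsub>M\<^esub> \<oplus>\<^bsub>N\<^esub> f \<zero>\<^bsub>M\<^esub> = f (\<zero>\<^bsub>M\<^esub> \<oplus>\<^bsub>M\<^esub> \<zero>\<^bsub>M\<^esub>)"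
    by (rule mod_hom_add[OF f, symmetric]) simp_all
  also have "\<dots> = f \<zero>\<^bsub>M\<^esub> \<oplus>\<^bsub>N\<^esub> \<zero>\<^bsub>N\<^esub>" using f0 by simp
  finally show ?thesis using f0 by simp
qed

lemma mod_hom_annihilated_by:
  assumes "module R M" and "module R N" and f: "f \<in> mod_hom R M N"
    and m: "m \<in> annihilated_by M J" and J: "J \<subseteq> carrier R"
  shows "f m \<in> annihilated_by N J"
proof -
  have "a \<odot>\<^bsub>N\<^esub> f m = \<zero>\<^bsub>N\<^esub>" if "a \<in> J" for a
  proof -
    have "a \<odot>\<^bsub>N\<^esub> f m = f (a \<odot>\<^bsub>M\<^esub> m)"
      by (rule mod_hom_smult[OF f, symmetric]) (use m J that in \<open>auto simp: annihilated_by_def\<close>)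
    also have "\<dots> = f \<zero>\<^bsub>M\<^esub>" using m that by (simp add: annihilated_by_def)
    finally show ?thesis using mod_hom_zero[OF assms(1-3)] by simp
  qed
  then show ?thesis using m f by (auto simp: mod_hom_closed annihilated_by_def)
qed

lemma fg_module_cyclic:
  assumes "module R M" and m: "m \<in> carrier M"
    and gen: "\<forall>x \<in> carrier M. \<exists>r \<in> carrier R. x = r \<odot>\<^bsub>M\<^esub> m"
  shows "fg_module R M"
  unfolding fg_module_def
proof (intro conjI exI[of _ "{m}"] ballI)
  interpret module R M by fact
  fix x assume "x \<in> carrier M"
  then obtain r where r: "r \<in> carrier R" "x = r \<odot>\<^bsub>M\<^esub> m" using gen by blast
  then have "x = finsum M (\<lambda>a. r \<odot>\<^bsub>M\<^esub> a) {m}" using m by (simp add: finsum_insert)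
  with r show "\<exists>c. c \<in> {m} \<rightarrow> carrier R \<and> x = finsum M (\<lambda>a. c a \<odot>\<^bsub>M\<^esub> a) {m}"
    by (intro exI[of _ "\<lambda>_. r"]) auto
qed (use assms in auto)

lemma nat_trans_hom_Gamma_eq:
  assumes "nat_trans_hom_Gamma R I M \<eta>" and "fg_module R M" and "fg_module R N"
    and f: "f \<in> mod_hom R M N"
  shows "\<eta> N f = f (\<eta> M (\<lambda>x \<in> carrier M. x))"
proof -
  have "module R M" using assms(2) by (simp add: fg_module_def)
  then have "(\<lambda>x \<in> carrier M. x) \<in> mod_hom R M M" by (rule mod_hom_id)
  moreover have "compose (carrier M) f (\<lambda>x \<in> carrier M. x) = f"
    using f by (intro compose_Id) (auto simp: mod_hom_def PiE_def)
  ultimately show ?thesis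
    using assms unfolding nat_trans_hom_Gamma_def by metis
qed

lemma ideal_pow_0: "ideal_pow R I 0 = carrier R"
  by (simp add: ideal_pow_def nat_pow_def ideals_set_def)

lemma ideal_pow_Suc: "ideal_pow R I (Suc k) = ideal_prod R (ideal_pow R I k) I"
  by (simp add: ideal_pow_def nat_pow_def ideals_set_def)

lemma ideal_pow_eventually_const:
  assumes "ideal_pow R I n = ideal_pow R I (Suc n)" and "n \<le> k"
  shows "ideal_pow R I k = ideal_pow R I n"
  using assms(2)
proof (induct k rule: dec_induct)
  case (step k)
  have "ideal_pow R I (Suc k) = ideal_prod R (ideal_pow R I n) I"
    by (simp only: ideal_pow_Suc step.hyps(3))
  also have "\<dots> = ideal_pow R I n"
    by (simp only: ideal_pow_Suc[symmetric] assms(1)[symmetric])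
  finally show ?case .
qed simp

lemma annihilated_by_ideal_pow_subset_Gamma: "annihilated_by N (ideal_pow R I k) \<subseteq> Gamma R I N"
  by (auto simp: annihilated_by_def Gamma_def)

context cring
begin

lemma ideal_ideal_pow: "ideal I R \<Longrightarrow> ideal (ideal_pow R I k) R"
  by (induct k) (simp_all add: ideal_pow_0 ideal_pow_Suc oneideal ideal_prod_is_ideal)

lemma ideal_pow_subset_carrier: "ideal I R \<Longrightarrow> ideal_pow R I k \<subseteq> carrier R"
  using ideal.Icarr[OF ideal_ideal_pow] by blast

lemma ideal_pow_Suc_subset: "ideal I R \<Longrightarrow> ideal_pow R I (Suc k) \<subseteq> ideal_pow R I k"
  using ideal_prod_inter[OF ideal_ideal_pow] by (auto simp: ideal_pow_Suc)

lemma ideal_pow_antimono: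
  assumes "ideal I R" and "k \<le> l"
  shows "ideal_pow R I l \<subseteq> ideal_pow R I k"
  using assms(2)
proof (induct l rule: dec_induct)
  case (step l)
  then show ?case using ideal_pow_Suc_subset[OF assms(1), of l] by blast
qed simp

lemma Gamma_eq_annihilated_by:
  assumes "ideal I R" and "ideal_pow R I n = ideal_pow R I (Suc n)"
  shows "Gamma R I N = annihilated_by N (ideal_pow R I n)"
proof
  have "ideal_pow R I n \<subseteq> ideal_pow R I k" for k
    using ideal_pow_antimono[OF assms(1), of k n] ideal_pow_eventually_const[OF assms(2), of k]
    by (cases "k \<le> n") auto
  then show "Gamma R I N \<subseteq> annihilated_by N (ideal_pow R I n)"
    by (auto simp: annihilated_by_def Gamma_def)
qed (rule annihilated_by_ideal_pow_subset_Gamma)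

context
  fixes J assumes J: "ideal J R"
begin

lemma quotient_module_module: "module R (quotient_module R J)"
  unfolding quotient_module_def
  by (rule module_ring_hom_module[OF is_cring ideal.quotient_is_ring[OF J] ideal.rcos_ring_hom[OF J]])

lemma quotient_module_carrier:
  "carrier (quotient_module R J) = (\<lambda>a. seq_lift (J +> a)) ` carrier R"
  by (auto simp: quotient_module_def ring_hom_module_carrier FactRing_def A_RCOSETS_def')

lemma quotient_class_closed: "a \<in> carrier R \<Longrightarrow> seq_lift (J +> a) \<in> carrier (quotient_module R J)"
  unfolding quotient_module_carrier by (rule imageI)

lemma quotient_module_add:
  "a \<in> carrier R \<Longrightarrow> b \<in> carrier R \<Longrightarrow>
    seq_lift (J +> a) \<oplus>\<^bsub>quotient_module R J\<^esub> seq_lift (J +> b) = seq_lift (J +> (a \<oplus> b))"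
  by (simp add: quotient_module_def ring_hom_module_add ring_hom_add[OF ideal.rcos_ring_hom[OF J]])

lemma quotient_module_smult:
  "r \<in> carrier R \<Longrightarrow> a \<in> carrier R \<Longrightarrow>
    r \<odot>\<^bsub>quotient_module R J\<^esub> seq_lift (J +> a) = seq_lift (J +> (r \<otimes> a))"
  by (simp add: quotient_module_def ring_hom_module_smult ring_hom_mult[OF ideal.rcos_ring_hom[OF J]])

lemma quotient_module_smult_one:
  "r \<in> carrier R \<Longrightarrow> r \<odot>\<^bsub>quotient_module R J\<^esub> seq_lift (J +> \<one>) = seq_lift (J +> r)"
  by (simp add: quotient_module_smult)

lemma quotient_class_eq_zero_iff:
  assumes "a \<in> carrier R"
  shows "seq_lift (J +> a) = \<zero>\<^bsub>quotient_module R J\<^esub> \<longleftrightarrow> a \<in> J"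
proof -
  have "\<zero>\<^bsub>quotient_module R J\<^esub> = seq_lift J"
    by (simp add: quotient_module_def ring_hom_module_zero FactRing_def)
  moreover have "seq_lift (J +> a) = seq_lift J \<longleftrightarrow> J +> a = J"
    using inj_seq_lift by (auto dest: injD)
  moreover have "J +> a = J \<longleftrightarrow> a \<in> J"
    using assms a_rcos_zero[OF J] ideal.rcos_const_imp_mem[OF J] by blast
  ultimately show ?thesis by simp
qed

lemma fg_quotient_module: "fg_module R (quotient_module R J)"
  by (rule fg_module_cyclic[OF quotient_module_module, of "seq_lift (J +> \<one>)"])
     (auto simp: quotient_module_carrier quotient_module_smult_one)

lemma quotient_class_one_annihilated_by_iff:
  assumes "K \<subseteq> carrier R"
  shows "seq_lift (J +> \<one>) \<in> annihilated_by (quotient_module R J) K \<longleftrightarrow> K \<subseteq> J"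
  using assms quotient_class_closed[OF one_closed]
  by (auto simp: annihilated_by_def quotient_module_smult_one quotient_class_eq_zero_iff subset_iff)

lemma quotient_module_hom_class:
  assumes "f \<in> mod_hom R (quotient_module R J) N" and "a \<in> carrier R"
  shows "f (seq_lift (J +> a)) = a \<odot>\<^bsub>N\<^esub> f (seq_lift (J +> \<one>))"
proof -
  have "f (seq_lift (J +> a)) = f (a \<odot>\<^bsub>quotient_module R J\<^esub> seq_lift (J +> \<one>))"
    by (simp only: quotient_module_smult_one[OF assms(2)])
  also have "\<dots> = a \<odot>\<^bsub>N\<^esub> f (seq_lift (J +> \<one>))"
    by (rule mod_hom_smult[OF assms quotient_class_closed[OF one_closed]])
  finally show ?thesis .
qed

lemma quotient_module_hom_eqI:
  assumes f: "f \<in> mod_hom R (quotient_module R J) N" and g: "g \<in> mod_hom R (quotient_module R J) N"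
    and "f (seq_lift (J +> \<one>)) = g (seq_lift (J +> \<one>))"
  shows "f = g"
proof
  fix x
  show "f x = g x"
  proof (cases "x \<in> carrier (quotient_module R J)")
    case True
    then obtain a where a: "a \<in> carrier R" and x: "x = seq_lift (J +> a)"
      by (auto simp: quotient_module_carrier)
    show ?thesis
      unfolding x quotient_module_hom_class[OF f a] quotient_module_hom_class[OF g a] assms(3) ..
  next
    case False
    show ?thesis unfolding mod_hom_undefined[OF f False] mod_hom_undefined[OF g False] ..
  qed
qed

lemma smult_rcoset_eq:
  assumes "module R N" and m: "m \<in> annihilated_by N J" and a: "a \<in> carrier R" and b: "b \<in> J +> a"
  shows "b \<odot>\<^bsub>N\<^esub> m = a \<odot>\<^bsub>N\<^esub> m"
proof -
  interpret N: module R N by fact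
  obtain j where j: "j \<in> J" and "b = j \<oplus> a" using b by (auto simp: a_r_coset_def')
  then have "b \<odot>\<^bsub>N\<^esub> m = j \<odot>\<^bsub>N\<^esub> m \<oplus>\<^bsub>N\<^esub> a \<odot>\<^bsub>N\<^esub> m"
    using a m ideal.Icarr[OF J j] by (simp add: annihilated_by_def N.smult_l_distr)
  also have "\<dots> = a \<odot>\<^bsub>N\<^esub> m" using a j m by (simp add: annihilated_by_def)
  finally show ?thesis .
qed

lemma quotient_module_hom_exists:
  assumes N: "module R N" and m: "m \<in> annihilated_by N J"
  shows "\<exists>f \<in> mod_hom R (quotient_module R J) N. f (seq_lift (J +> \<one>)) = m"
proof -
  interpret N: module R N by fact
  have mc: "m \<in> carrier N" using m by (simp add: annihilated_by_def)
  define f where "f = (\<lambda>x \<in> carrier (quotient_module R J). (SOME b. b \<in> (\<lambda>g. g 0) ` x) \<odot>\<^bsub>N\<^esub> m)"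
  have f_class: "f (seq_lift (J +> a)) = a \<odot>\<^bsub>N\<^esub> m" if a: "a \<in> carrier R" for a
  proof -
    have "a \<in> J +> a"
      using a additive_subgroup.zero_closed[OF ideal.axioms(1)[OF J]] by (force simp: a_r_coset_def')
    then have "(SOME b. b \<in> J +> a) \<in> J +> a" by (rule someI)
    then show ?thesis
      using smult_rcoset_eq[OF N m a] quotient_class_closed[OF a] by (simp add: f_def)
  qed
  have "f \<in> mod_hom R (quotient_module R J) N"
    unfolding mod_hom_def
  proof (intro CollectI conjI ballI)
    show "f \<in> carrier (quotient_module R J) \<rightarrow>\<^sub>E carrier N"
      using mc by (auto simp: quotient_module_carrier f_class) (simp add: f_def quotient_module_carrier)
  next
    fix x y assume "x \<in> carrier (quotient_module R J)" "y \<in> carrier (quotient_module R J)"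
    then obtain a b where "a \<in> carrier R" "b \<in> carrier R" "x = seq_lift (J +> a)" "y = seq_lift (J +> b)"
      by (auto simp: quotient_module_carrier)
    then show "f (x \<oplus>\<^bsub>quotient_module R J\<^esub> y) = f x \<oplus>\<^bsub>N\<^esub> f y"
      using mc by (simp add: quotient_module_add f_class N.smult_l_distr)
  next
    fix r x assume "r \<in> carrier R" "x \<in> carrier (quotient_module R J)"
    then obtain a where "r \<in> carrier R" "a \<in> carrier R" "x = seq_lift (J +> a)"
      by (auto simp: quotient_module_carrier)
    then show "f (r \<odot>\<^bsub>quotient_module R J\<^esub> x) = r \<odot>\<^bsub>N\<^esub> f x"
      using mc by (simp add: quotient_module_smult f_class N.smult_assoc1)
  qed
  moreover have "f (seq_lift (J +> \<one>)) = m" using f_class[OF one_closed] mc by simp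
  ultimately show ?thesis by blast
qed

lemma bij_betw_quotient_module_hom:
  assumes "module R N"
  shows "bij_betw (\<lambda>f. f (seq_lift (J +> \<one>))) (mod_hom R (quotient_module R J) N) (annihilated_by N J)"
proof (rule bij_betwI')
  fix f g
  assume "f \<in> mod_hom R (quotient_module R J) N" "g \<in> mod_hom R (quotient_module R J) N"
  then show "f (seq_lift (J +> \<one>)) = g (seq_lift (J +> \<one>)) \<longleftrightarrow> f = g"
    by (auto intro: quotient_module_hom_eqI)
next
  fix f assume "f \<in> mod_hom R (quotient_module R J) N"
  then show "f (seq_lift (J +> \<one>)) \<in> annihilated_by N J"
    using mod_hom_annihilated_by[OF quotient_module_module assms]
      quotient_class_one_annihilated_by_iff ideal.Icarr[OF J] by blast
next
  fix m assume "m \<in> annihilated_by N J"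
  then show "\<exists>f \<in> mod_hom R (quotient_module R J) N. m = f (seq_lift (J +> \<one>))"
    using quotient_module_hom_exists[OF assms] by metis
qed

end

lemma stable_imp_Gamma_representable:
  assumes I: "ideal I R" and stable: "ideal_pow R I n = ideal_pow R I (Suc n)"
  shows "Gamma_representable R I"
proof -
  define J where "J = ideal_pow R I n"
  have J: "ideal J R" unfolding J_def using I by (rule ideal_ideal_pow)
  define \<eta> where
    "\<eta> = (\<lambda>(N :: 'a obj) (f :: (nat \<Rightarrow> 'a) set \<Rightarrow> (nat \<Rightarrow> 'a) set). f (seq_lift (J +> \<one>)))"
  have bij: "bij_betw (\<eta> N) (mod_hom R (quotient_module R J) N) (Gamma R I N)"
    if "fg_module R N" for N :: "'a obj"
  proof -
    have "module R N" using that by (simp add: fg_module_def)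
    then show ?thesis
      unfolding \<eta>_def Gamma_eq_annihilated_by[OF I stable] J_def[symmetric]
      by (rule bij_betw_quotient_module_hom[OF J])
  qed
  have one: "seq_lift (J +> \<one>) \<in> carrier (quotient_module R J)"
    by (rule quotient_class_closed[OF J one_closed])
  have "nat_trans_hom_Gamma R I (quotient_module R J) \<eta>"
    unfolding nat_trans_hom_Gamma_def
    using bij_betw_apply[OF bij] one by (simp add: \<eta>_def hom_add_def hom_smult_def compose_def)
  then show ?thesis
    unfolding Gamma_representable_def using fg_quotient_module[OF J] bij by blast
qed

lemma Gamma_fin_gen_imp_stable:
  assumes I: "ideal I R" and "Gamma_fin_gen R I"
  shows "\<exists>n. ideal_pow R I n = ideal_pow R I (Suc n)"
proof -
  obtain M :: "'a obj" and \<eta> where M: "fg_module R M" and nt: "nat_trans_hom_Gamma R I M \<eta>"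
    and surj: "\<And>N. fg_module R N \<Longrightarrow> \<eta> N ` mod_hom R M N = Gamma R I N"
    using assms(2) unfolding Gamma_fin_gen_def by blast
  have modM: "module R M" using M by (simp add: fg_module_def)
  define x where "x = \<eta> M (\<lambda>y \<in> carrier M. y)"
  have "x \<in> Gamma R I M"
    unfolding x_def using surj[OF M] mod_hom_id[OF modM] by blast
  then obtain k where x: "x \<in> annihilated_by M (ideal_pow R I k)"
    by (auto simp: Gamma_def annihilated_by_def)
  define J where "J = ideal_pow R I (Suc k)"
  have J: "ideal J R" unfolding J_def using I by (rule ideal_ideal_pow)
  have Ik: "ideal_pow R I k \<subseteq> carrier R" using I by (rule ideal_pow_subset_carrier)
  have "seq_lift (J +> \<one>) \<in> annihilated_by (quotient_module R J) J"
    using quotient_class_one_annihilated_by_iff[OF J] ideal_pow_subset_carrier[OF I] by (simp add: J_def)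
  then have "seq_lift (J +> \<one>) \<in> Gamma R I (quotient_module R J)"
    unfolding J_def by (rule subsetD[OF annihilated_by_ideal_pow_subset_Gamma])
  then obtain g where g: "g \<in> mod_hom R M (quotient_module R J)"
    and "\<eta> (quotient_module R J) g = seq_lift (J +> \<one>)"
    using surj[OF fg_quotient_module[OF J]] by (metis imageE)
  then have "g x = seq_lift (J +> \<one>)"
    using nat_trans_hom_Gamma_eq[OF nt M fg_quotient_module[OF J] g] by (simp add: x_def)
  then have "seq_lift (J +> \<one>) \<in> annihilated_by (quotient_module R J) (ideal_pow R I k)"
    using mod_hom_annihilated_by[OF modM quotient_module_module[OF J] g x Ik] by simp
  then have "ideal_pow R I k \<subseteq> ideal_pow R I (Suc k)"
    using quotient_class_one_annihilated_by_iff[OF J Ik] by (simp add: J_def)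
  then show ?thesis using ideal_pow_Suc_subset[OF I, of k] by blast
qed

end

lemma Gamma_representable_imp_fin_gen: "Gamma_representable R I \<Longrightarrow> Gamma_fin_gen R I"
  unfolding Gamma_representable_def Gamma_fin_gen_def by (meson bij_betw_imp_surj_on)

theorem corollary3p3:
  fixes R :: "'a ring" and I :: "'a set"
  assumes "cring R" and "noetherian_ring R" and "ideal I R"
  shows "(Gamma_representable R I \<longleftrightarrow> Gamma_fin_gen R I) \<and>
         (Gamma_fin_gen R I \<longleftrightarrow> (\<exists>n. ideal_pow R I n = ideal_pow R I (Suc n)))"
proof -
  interpret cring R by fact
  have "Gamma_representable R I \<Longrightarrow> Gamma_fin_gen R I"
    by (rule Gamma_representable_imp_fin_gen)
  moreover have "Gamma_fin_gen R I \<Longrightarrow> \<exists>n. ideal_pow R I n = ideal_pow R I (Suc n)"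
    using Gamma_fin_gen_imp_stable[OF assms(3)] .
  moreover have "ideal_pow R I n = ideal_pow R I (Suc n) \<Longrightarrow> Gamma_representable R I" for n
    using stable_imp_Gamma_representable[OF assms(3)] .
  ultimately show ?thesis by blast
qed

end
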